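(* Let $\mathfrak{F}$ be an anchor ring (torus of revolution) in $\mathbb{E}^3$, i.e. the tube $\boldsymbol{x}(u,\phi)=\boldsymbol{a}(u)+r\cos\phi\,\boldsymbol{h}(u)+r\sin\phi\,\boldsymbol{b}(u)$ about a plane circle $\boldsymbol{a}$ of constant curvature $\kappa>0$ (torsion $\tau=0$), with $0<r<1/\kappa$. Let $W$ be any open portion of $\mathfrak{F}$ on which $\cos\phi\neq 0$ (equivalently, the Gauss curvature $K\neq 0$). Then there is no constant real $3\times 3$ matrix $A$ such that the Gauss map $\boldsymbol{N}$ of $\mathfrak{F}$ satisfies $\Delta^{II}\boldsymbol{N}=A\boldsymbol{N}$ on $W$; that is, the anchor ring is of coordinate infinite type Gauss map with respect to the second fundamental form. *)

theory Defs
  imports "HOL-Analysis.Analysis"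
begin

definition pdu :: "(real \<times> real \<Rightarrow> real^3) \<Rightarrow> real \<times> real \<Rightarrow> real^3" where
  "pdu f p = vector_derivative (\<lambda>s. f (s, snd p)) (at (fst p))"

definition pdv :: "(real \<times> real \<Rightarrow> real^3) \<Rightarrow> real \<times> real \<Rightarrow> real^3" where
  "pdv f p = vector_derivative (\<lambda>s. f (fst p, s)) (at (snd p))"

definition frenet_t :: "(real \<Rightarrow> real^3) \<Rightarrow> real \<Rightarrow> real^3" where
  "frenet_t a u = vector_derivative a (at u)"

definition frenet_h :: "(real \<Rightarrow> real^3) \<Rightarrow> real \<Rightarrow> real^3" where
  "frenet_h a u = sgn (vector_derivative (frenet_t a) (at u))"

definition frenet_b :: "(real \<Rightarrow> real^3) \<Rightarrow> real \<Rightarrow> real^3" where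
  "frenet_b a u = cross3 (frenet_t a u) (frenet_h a u)"

definition tube :: "(real \<Rightarrow> real^3) \<Rightarrow> real \<Rightarrow> real \<times> real \<Rightarrow> real^3" where
  "tube a r p = a (fst p) + (r * cos (snd p)) *\<^sub>R frenet_h a (fst p)
                          + (r * sin (snd p)) *\<^sub>R frenet_b a (fst p)"

definition circle :: "real^3 \<Rightarrow> real^3 \<Rightarrow> real^3 \<Rightarrow> real \<Rightarrow> real \<Rightarrow> real^3" where
  "circle c e1 e2 \<kappa> u = c + (1 / \<kappa>) *\<^sub>R (cos (\<kappa> * u) *\<^sub>R e1 + sin (\<kappa> * u) *\<^sub>R e2)"

definition gauss_map :: "(real \<times> real \<Rightarrow> real^3) \<Rightarrow> real \<times> real \<Rightarrow> real^3" where
  "gauss_map x p = sgn (cross3 (pdu x p) (pdv x p))"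

definition II11 :: "(real \<times> real \<Rightarrow> real^3) \<Rightarrow> real \<times> real \<Rightarrow> real" where
  "II11 x p = inner (pdu (pdu x) p) (gauss_map x p)"

definition II12 :: "(real \<times> real \<Rightarrow> real^3) \<Rightarrow> real \<times> real \<Rightarrow> real" where
  "II12 x p = inner (pdu (pdv x) p) (gauss_map x p)"

definition II22 :: "(real \<times> real \<Rightarrow> real^3) \<Rightarrow> real \<times> real \<Rightarrow> real" where
  "II22 x p = inner (pdv (pdv x) p) (gauss_map x p)"

definition IIdet :: "(real \<times> real \<Rightarrow> real^3) \<Rightarrow> real \<times> real \<Rightarrow> real" where
  "IIdet x p = II11 x p * II22 x p - (II12 x p)^2"

text \<open>Laplace operator of the (non-degenerate) second fundamental form, applied
  componentwise to a vector valued function f: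
  Delta^II f = -(1/sqrt|h|) sum_ij d_i (sqrt|h| h^ij d_j f).\<close>

definition lapII :: "(real \<times> real \<Rightarrow> real^3) \<Rightarrow> (real \<times> real \<Rightarrow> real^3) \<Rightarrow> real \<times> real \<Rightarrow> real^3" where
  "lapII x f p =
     - (1 / sqrt \<bar>IIdet x p\<bar>) *\<^sub>R
       ( pdu (\<lambda>q. (sqrt \<bar>IIdet x q\<bar> / IIdet x q) *\<^sub>R
                   (II22 x q *\<^sub>R pdu f q - II12 x q *\<^sub>R pdv f q)) p
       + pdv (\<lambda>q. (sqrt \<bar>IIdet x q\<bar> / IIdet x q) *\<^sub>R
                   (- II12 x q *\<^sub>R pdu f q + II11 x q *\<^sub>R pdv f q)) p)"

end

theory Submission
  imports Defs "HOL-Computational_Algebra.Polynomial"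
begin

text \<open>
  Work in the orthonormal frame \<open>e1, e2, e3 = e1 \<times> e2\<close> of the circle and write
  \<open>\<rho>(u) = cos(\<kappa>u) e1 + sin(\<kappa>u) e2\<close>. The Gauss map of the anchor ring is
  \<open>N(u,\<phi>) = cos \<phi> \<rho>(u) - sin \<phi> e3\<close>, its second fundamental form is diagonal with
  \<open>h11 = -\<kappa>(1 - r\<kappa> cos \<phi>) cos \<phi>\<close> and \<open>h22 = r\<close>, and a direct computation gives
  \<open>\<Delta>\<^sup>I\<^sup>I N = L(\<phi>) \<rho>(u) + M(\<phi>) e3\<close> with
  \<open>L(\<phi>) = (3 cos\<^sup>2\<phi> - 4r\<kappa> cos\<^sup>3\<phi> - 1) / (2r(1 - r\<kappa> cos \<phi>) cos \<phi>)\<close>.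
  If \<open>\<Delta>\<^sup>I\<^sup>I N = A N\<close> on \<open>W\<close>, subtracting the equation at two values of \<open>u\<close> with the
  same \<open>\<phi>\<close> kills the \<open>e3\<close>-components and leaves \<open>L(\<phi>) d = cos \<phi> A d\<close> for a fixed
  chord \<open>d \<noteq> 0\<close> of the circle, so \<open>L(\<phi>) = K cos \<phi>\<close> on an interval. Clearing
  denominators makes \<open>cos \<phi>\<close> a root of a fixed nonzero cubic on that interval, which is
  impossible because \<open>cos\<close> is not locally constant.
\<close>

definition frame3 :: "real^3 \<Rightarrow> real^3 \<Rightarrow> real \<Rightarrow> real \<Rightarrow> real \<Rightarrow> real^3" where
  "frame3 e1 e2 a b c = a *\<^sub>R e1 + b *\<^sub>R e2 + c *\<^sub>R cross3 e1 e2"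

lemma frame3_add:
  "frame3 e1 e2 a b c + frame3 e1 e2 a' b' c' = frame3 e1 e2 (a + a') (b + b') (c + c')"
  by (simp add: frame3_def algebra_simps)

lemma frame3_diff:
  "frame3 e1 e2 a b c - frame3 e1 e2 a' b' c' = frame3 e1 e2 (a - a') (b - b') (c - c')"
  by (simp add: frame3_def algebra_simps)

lemma scaleR_frame3: "x *\<^sub>R frame3 e1 e2 a b c = frame3 e1 e2 (x * a) (x * b) (x * c)"
  by (simp add: frame3_def algebra_simps)

lemma has_vector_derivative_frame3:
  assumes "(a has_real_derivative a') (at s)" "(b has_real_derivative b') (at s)"
    and "(c has_real_derivative c') (at s)"
  shows "((\<lambda>s. frame3 e1 e2 (a s) (b s) (c s)) has_vector_derivative frame3 e1 e2 a' b' c') (at s)"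
  unfolding frame3_def
  using has_vector_derivative_scaleR[OF assms(1) has_vector_derivative_const[of e1]]
    has_vector_derivative_scaleR[OF assms(2) has_vector_derivative_const[of e2]]
    has_vector_derivative_scaleR[OF assms(3) has_vector_derivative_const[of "cross3 e1 e2"]]
  by (auto intro!: has_vector_derivative_add)

lemma pdu_frame3:
  assumes "((\<lambda>s. a s \<phi>) has_real_derivative a') (at u)"
    and "((\<lambda>s. b s \<phi>) has_real_derivative b') (at u)"
    and "((\<lambda>s. c s \<phi>) has_real_derivative c') (at u)"
  shows "pdu (\<lambda>(u, \<phi>). frame3 e1 e2 (a u \<phi>) (b u \<phi>) (c u \<phi>)) (u, \<phi>) = frame3 e1 e2 a' b' c'"
  unfolding pdu_def by (rule vector_derivative_at) (simp add: has_vector_derivative_frame3[OF assms])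

lemma pdv_frame3:
  assumes "((\<lambda>s. a u s) has_real_derivative a') (at \<phi>)"
    and "((\<lambda>s. b u s) has_real_derivative b') (at \<phi>)"
    and "((\<lambda>s. c u s) has_real_derivative c') (at \<phi>)"
  shows "pdv (\<lambda>(u, \<phi>). frame3 e1 e2 (a u \<phi>) (b u \<phi>) (c u \<phi>)) (u, \<phi>) = frame3 e1 e2 a' b' c'"
  unfolding pdv_def by (rule vector_derivative_at) (simp add: has_vector_derivative_frame3[OF assms])

lemma pdu_add_const: "pdu (\<lambda>(u, \<phi>). f u \<phi> + z) = pdu (\<lambda>(u, \<phi>). f u \<phi>)"
  by (simp add: fun_eq_iff pdu_def vector_derivative_def has_vector_derivative_add_const)

lemma pdv_add_const: "pdv (\<lambda>(u, \<phi>). f u \<phi> + z) = pdv (\<lambda>(u, \<phi>). f u \<phi>)"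
  by (simp add: fun_eq_iff pdv_def vector_derivative_def has_vector_derivative_add_const)

lemma cross_cross_expand: "cross3 a (cross3 b c) = inner a c *\<^sub>R b - inner a b *\<^sub>R c"
  for a b c :: "real^3"
  by (simp add: cross3_simps forall_3)

lemma lapII_diagonal:
  assumes "\<And>q. II12 x q = 0"
  shows "lapII x f p = - (1 / sqrt \<bar>IIdet x p\<bar>) *\<^sub>R
           (pdu (\<lambda>q. (sqrt \<bar>IIdet x q\<bar> / II11 x q) *\<^sub>R pdu f q) p
          + pdv (\<lambda>q. (sqrt \<bar>IIdet x q\<bar> / II22 x q) *\<^sub>R pdv f q) p)"
proof -
  \<comment> \<open>also where \<open>IIdet x q = 0\<close>: then both sides vanish, as \<open>t / 0 = 0\<close>\<close>
  have "sqrt \<bar>IIdet x q\<bar> / IIdet x q * II22 x q = sqrt \<bar>IIdet x q\<bar> / II11 x q"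
    and "sqrt \<bar>IIdet x q\<bar> / IIdet x q * II11 x q = sqrt \<bar>IIdet x q\<bar> / II22 x q" for q
    using assms[of q] by (auto simp: IIdet_def)
  then have "(\<lambda>q. (sqrt \<bar>IIdet x q\<bar> / IIdet x q) *\<^sub>R (II22 x q *\<^sub>R pdu f q - II12 x q *\<^sub>R pdv f q))
        = (\<lambda>q. (sqrt \<bar>IIdet x q\<bar> / II11 x q) *\<^sub>R pdu f q)"
    and "(\<lambda>q. (sqrt \<bar>IIdet x q\<bar> / IIdet x q) *\<^sub>R (- II12 x q *\<^sub>R pdu f q + II11 x q *\<^sub>R pdv f q))
        = (\<lambda>q. (sqrt \<bar>IIdet x q\<bar> / II22 x q) *\<^sub>R pdv f q)"
    by (simp_all add: assms)
  then show ?thesis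
    unfolding lapII_def by (simp only:)
qed

lemma has_real_derivative_sqrt_abs:
  assumes "(f has_real_derivative f') (at x)" and "f x \<noteq> 0"
  shows "((\<lambda>s. sqrt \<bar>f s\<bar>) has_real_derivative f' * sqrt \<bar>f x\<bar> / (2 * f x)) (at x)"
proof -
  have "((\<lambda>s. sqrt (sqrt ((f s)\<^sup>2))) has_real_derivative f' * sqrt \<bar>f x\<bar> / (2 * f x)) (at x)"
    using assms
    by (auto intro!: derivative_eq_intros simp del: real_sqrt_abs) (simp add: field_simps)
  then show ?thesis by simp
qed

lemma scaleR_proportional:
  fixes d y :: "'a::real_vector"
  assumes "\<forall>t\<in>T. f t *\<^sub>R d = g t *\<^sub>R y" and "d \<noteq> 0" and "s \<in> T" and "g s \<noteq> 0"
  shows "\<exists>K. \<forall>t\<in>T. f t = K * g t"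
proof -
  have y_eq: "y = (f s / g s) *\<^sub>R d"
    using assms(1,3,4) by (metis eq_vector_fraction_iff)
  have "f t *\<^sub>R d = (f s / g s * g t) *\<^sub>R d" if "t \<in> T" for t
    using bspec[OF assms(1) that] unfolding y_eq scaleR_scaleR by (simp only: mult.commute)
  then have "\<forall>t\<in>T. f t = f s / g s * g t"
    using assms(2) by simp
  then show ?thesis by blast
qed

lemma poly_cos_nonzero_on_interval:
  fixes p :: "real poly"
  assumes "p \<noteq> 0" and "a < b"
  shows "\<exists>t\<in>{a<..<b}. poly p (cos t) \<noteq> 0"
proof (rule ccontr)
  assume "\<not> ?thesis"
  then have "cos ` {a<..<b} \<subseteq> {x. poly p x = 0}" by auto
  then have "finite (cos ` {a<..<b})"
    using poly_roots_finite[OF assms(1)] finite_subset by blast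
  moreover have "connected (cos ` {a<..<b})"
    by (rule connected_continuous_image) (auto intro: continuous_intros)
  moreover have "cos ` {a<..<b} \<noteq> {}"
    using assms(2) by simp
  ultimately obtain v where "cos ` {a<..<b} = {v}"
    using connected_finite_iff_sing by blast
  then have cos_eq: "cos t = v" if "t \<in> {a<..<b}" for t
    using that by blast
  have sin_0: "sin t = 0" if t: "t \<in> {a<..<b}" for t
  proof -
    have "min (t - a) (b - t) > 0"
      using t by simp
    moreover have "\<forall>y. \<bar>t - y\<bar> < min (t - a) (b - t) \<longrightarrow> cos t = cos y"
      using t by (auto simp: cos_eq abs_less_iff)
    ultimately have "- sin t = 0"
      by (rule DERIV_local_const[OF DERIV_cos])
    then show ?thesis by simp
  qed
  define m where "m = (a + b) / 2"
  have "(b - a) / 2 > 0"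
    using assms(2) by simp
  moreover have "\<forall>y. \<bar>m - y\<bar> < (b - a) / 2 \<longrightarrow> sin m = sin y"
  proof (intro allI impI)
    fix y
    assume "\<bar>m - y\<bar> < (b - a) / 2"
    then have "m \<in> {a<..<b}" and "y \<in> {a<..<b}"
      using assms(2) by (auto simp: m_def abs_less_iff field_simps)
    then show "sin m = sin y"
      by (simp add: sin_0)
  qed
  ultimately have "cos m = 0"
    by (rule DERIV_local_const[OF DERIV_sin])
  moreover have "sin m = 0"
    using assms(2) by (intro sin_0) (simp add: m_def)
  ultimately show False
    using sin_cos_squared_add[of m] by simp
qed

lemma open_contains_square:
  fixes S :: "(real \<times> real) set"
  assumes "open S" and "(u0, \<phi>0) \<in> S"
  obtains \<epsilon> where "\<epsilon> > 0"
    and "\<And>u \<phi>. \<bar>u - u0\<bar> < \<epsilon> \<Longrightarrow> \<bar>\<phi> - \<phi>0\<bar> < \<epsilon> \<Longrightarrow> (u, \<phi>) \<in> S"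
proof -
  obtain \<delta> where "\<delta> > 0" and ball: "ball (u0, \<phi>0) \<delta> \<subseteq> S"
    using assms open_contains_ball by blast
  have "(u, \<phi>) \<in> S" if "\<bar>u - u0\<bar> < \<delta> / 2" "\<bar>\<phi> - \<phi>0\<bar> < \<delta> / 2" for u \<phi>
  proof -
    have "dist (u0, \<phi>0) (u, \<phi>) \<le> dist (u0, \<phi>0) (u, \<phi>0) + dist (u, \<phi>0) (u, \<phi>)"
      by (rule dist_triangle)
    also have "\<dots> = \<bar>u - u0\<bar> + \<bar>\<phi> - \<phi>0\<bar>"
      by (simp add: dist_Pair_Pair dist_real_def abs_minus_commute)
    finally show ?thesis using that ball by auto
  qed
  then show ?thesis using \<open>\<delta> > 0\<close> that[of "\<delta> / 2"] by auto
qed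

locale orthonormal_pair =
  fixes e1 e2 :: "real^3"
  assumes norm_e1: "norm e1 = 1" and norm_e2: "norm e2 = 1" and inner_e1_e2: "inner e1 e2 = 0"
begin

lemma inner_frame3:
  "inner (frame3 e1 e2 a b c) (frame3 e1 e2 a' b' c') = a * a' + b * b' + c * c'"
proof -
  have "inner e1 e1 = 1" "inner e2 e2 = 1"
    using norm_e1 norm_e2 by (simp_all add: norm_eq_sqrt_inner)
  moreover have "inner (cross3 e1 e2) (cross3 e1 e2) = 1"
    using norm_cross_dot[of e1 e2] norm_e1 norm_e2 inner_e1_e2 by (simp add: power2_norm_eq_inner)
  ultimately show ?thesis
    using inner_e1_e2 dot_cross_self[of e1 e2]
    by (simp add: frame3_def inner_add_left inner_add_right inner_commute)
qed

lemma norm_frame3: "norm (frame3 e1 e2 a b c) = sqrt (a\<^sup>2 + b\<^sup>2 + c\<^sup>2)"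
  by (simp add: norm_eq_sqrt_inner inner_frame3 power2_eq_square)

lemma frame3_eq_0_iff: "frame3 e1 e2 a b c = 0 \<longleftrightarrow> a = 0 \<and> b = 0 \<and> c = 0"
proof
  assume "frame3 e1 e2 a b c = 0"
  then have "norm (frame3 e1 e2 a b c) = 0" by simp
  then show "a = 0 \<and> b = 0 \<and> c = 0"
    unfolding norm_frame3 by (smt (verit) real_sqrt_eq_zero_cancel_iff zero_le_power2 zero_eq_power2)
qed (simp add: frame3_def)

lemma frame3_eq_iff: "frame3 e1 e2 a b c = frame3 e1 e2 a' b' c' \<longleftrightarrow> a = a' \<and> b = b' \<and> c = c'"
  using frame3_eq_0_iff[of "a - a'" "b - b'" "c - c'"] by (simp flip: frame3_diff)

lemma cross_frame3:
  "cross3 (frame3 e1 e2 a b c) (frame3 e1 e2 a' b' c')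
     = frame3 e1 e2 (b * c' - c * b') (c * a' - a * c') (a * b' - b * a')"
proof -
  have "inner e1 e1 = 1" "inner e2 e2 = 1"
    using norm_e1 norm_e2 by (simp_all add: norm_eq_sqrt_inner)
  then have "cross3 e2 (cross3 e1 e2) = e1" "cross3 e1 (cross3 e1 e2) = - e2"
    using inner_e1_e2 by (simp_all add: cross_cross_expand inner_commute)
  moreover from this have "cross3 (cross3 e1 e2) e1 = e2" "cross3 (cross3 e1 e2) e2 = - e1"
    using cross_skew[of "cross3 e1 e2" e1] cross_skew[of "cross3 e1 e2" e2] by simp_all
  ultimately show ?thesis
    by (simp add: frame3_def cross_add_left cross_add_right cross_mult_left cross_mult_right
        cross_skew[of e2 e1] algebra_simps)
qed

end

locale anchor_ring = orthonormal_pair +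
  fixes c :: "real^3" and \<kappa> r :: real
  assumes curvature_pos: "\<kappa> > 0" and radius_pos: "r > 0" and radius_less: "r < 1 / \<kappa>"
begin

abbreviation torus :: "real \<times> real \<Rightarrow> real^3" where
  "torus \<equiv> tube (circle c e1 e2 \<kappa>) r"

lemma one_minus_r_kappa_cos_pos: "1 - r * \<kappa> * cos \<phi> > 0"
proof -
  have "r * \<kappa> * cos \<phi> \<le> r * \<kappa>"
    using radius_pos curvature_pos by (simp add: mult_left_le)
  also have "\<dots> < 1"
    using radius_less curvature_pos by (simp add: field_simps)
  finally show ?thesis by simp
qed

lemma circle_frame3: "circle c e1 e2 \<kappa> = (\<lambda>u. frame3 e1 e2 (cos (\<kappa> * u) / \<kappa>) (sin (\<kappa> * u) / \<kappa>) 0 + c)"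
  by (simp add: fun_eq_iff circle_def frame3_def scaleR_add_right)

lemma frenet_t_circle: "frenet_t (circle c e1 e2 \<kappa>) u = frame3 e1 e2 (- sin (\<kappa> * u)) (cos (\<kappa> * u)) 0"
  unfolding frenet_t_def circle_frame3
  by (rule vector_derivative_at, subst has_vector_derivative_add_const,
      rule has_vector_derivative_frame3)
     (use curvature_pos in \<open>auto intro!: derivative_eq_intros\<close>)

lemma frenet_h_circle: "frenet_h (circle c e1 e2 \<kappa>) u = frame3 e1 e2 (- cos (\<kappa> * u)) (- sin (\<kappa> * u)) 0"
proof -
  have "vector_derivative (frenet_t (circle c e1 e2 \<kappa>)) (at u)
      = frame3 e1 e2 (- \<kappa> * cos (\<kappa> * u)) (- \<kappa> * sin (\<kappa> * u)) 0"
    unfolding frenet_t_circle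
    by (rule vector_derivative_at, rule has_vector_derivative_frame3)
       (auto intro!: derivative_eq_intros)
  moreover have "norm (frame3 e1 e2 (- \<kappa> * cos (\<kappa> * u)) (- \<kappa> * sin (\<kappa> * u)) 0) = \<kappa>"
    using curvature_pos by (simp add: norm_frame3 power_mult_distrib flip: distrib_left)
  ultimately show ?thesis
    using curvature_pos by (simp add: frenet_h_def sgn_div_norm scaleR_frame3 field_simps)
qed

lemma frenet_b_circle: "frenet_b (circle c e1 e2 \<kappa>) u = frame3 e1 e2 0 0 1"
  by (simp add: frenet_b_def frenet_t_circle frenet_h_circle cross_frame3 flip: power2_eq_square)

lemma torus_frame3:
  "torus = (\<lambda>(u, \<phi>). frame3 e1 e2 ((1 - r * \<kappa> * cos \<phi>) / \<kappa> * cos (\<kappa> * u))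
                                ((1 - r * \<kappa> * cos \<phi>) / \<kappa> * sin (\<kappa> * u)) (r * sin \<phi>) + c)"
  unfolding tube_def frenet_h_circle frenet_b_circle
  using curvature_pos by (auto simp: fun_eq_iff circle_frame3 scaleR_frame3 frame3_add field_simps)

lemma pdu_torus:
  "pdu torus = (\<lambda>(u, \<phi>). frame3 e1 e2 (- (1 - r * \<kappa> * cos \<phi>) * sin (\<kappa> * u))
                                     ((1 - r * \<kappa> * cos \<phi>) * cos (\<kappa> * u)) 0)"
  unfolding torus_frame3 pdu_add_const
  using curvature_pos by (auto simp: fun_eq_iff field_simps intro!: pdu_frame3 derivative_eq_intros)

lemma pdv_torus:
  "pdv torus = (\<lambda>(u, \<phi>). frame3 e1 e2 (r * sin \<phi> * cos (\<kappa> * u)) (r * sin \<phi> * sin (\<kappa> * u))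
                                     (r * cos \<phi>))"
  unfolding torus_frame3 pdv_add_const
  using curvature_pos by (auto simp: fun_eq_iff intro!: pdv_frame3 derivative_eq_intros)

lemma pdu_pdu_torus:
  "pdu (pdu torus) (u, \<phi>) = frame3 e1 e2 (- \<kappa> * (1 - r * \<kappa> * cos \<phi>) * cos (\<kappa> * u))
                                      (- \<kappa> * (1 - r * \<kappa> * cos \<phi>) * sin (\<kappa> * u)) 0"
  unfolding pdu_torus by (auto simp: algebra_simps intro!: pdu_frame3 derivative_eq_intros)

lemma pdu_pdv_torus:
  "pdu (pdv torus) (u, \<phi>) = frame3 e1 e2 (- \<kappa> * r * sin \<phi> * sin (\<kappa> * u))
                                      (\<kappa> * r * sin \<phi> * cos (\<kappa> * u)) 0"
  unfolding pdv_torus by (auto intro!: pdu_frame3 derivative_eq_intros)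

lemma pdv_pdv_torus:
  "pdv (pdv torus) (u, \<phi>) = frame3 e1 e2 (r * cos \<phi> * cos (\<kappa> * u)) (r * cos \<phi> * sin (\<kappa> * u))
                                      (- r * sin \<phi>)"
  unfolding pdv_torus by (auto intro!: pdv_frame3 derivative_eq_intros)

lemma gauss_map_torus:
  "gauss_map torus = (\<lambda>(u, \<phi>). frame3 e1 e2 (cos \<phi> * cos (\<kappa> * u)) (cos \<phi> * sin (\<kappa> * u)) (- sin \<phi>))"
proof (intro ext, clarify)
  fix u \<phi>
  define N where "N = frame3 e1 e2 (cos \<phi> * cos (\<kappa> * u)) (cos \<phi> * sin (\<kappa> * u)) (- sin \<phi>)"
  have cross_eq: "cross3 (pdu torus (u, \<phi>)) (pdv torus (u, \<phi>)) = (r * (1 - r * \<kappa> * cos \<phi>)) *\<^sub>R N"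
  proof -
    have "- (1 - r * \<kappa> * cos \<phi>) * sin (\<kappa> * u) * (r * sin \<phi> * sin (\<kappa> * u))
          - (1 - r * \<kappa> * cos \<phi>) * cos (\<kappa> * u) * (r * sin \<phi> * cos (\<kappa> * u))
        = r * (1 - r * \<kappa> * cos \<phi>) * - sin \<phi>"
      using sin_cos_squared_add[of "\<kappa> * u"] by algebra
    then show ?thesis
      unfolding pdu_torus pdv_torus N_def by (simp add: cross_frame3 scaleR_frame3 frame3_eq_iff algebra_simps)
  qed
  have "norm N = 1"
    unfolding N_def norm_frame3 by (simp add: power_mult_distrib flip: distrib_left)
  moreover have "sgn (r * (1 - r * \<kappa> * cos \<phi>)) = 1"
    using radius_pos one_minus_r_kappa_cos_pos by (intro sgn_pos) simp
  ultimately show "gauss_map torus (u, \<phi>) = N"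
    unfolding gauss_map_def cross_eq sgn_scaleR by (simp add: sgn_div_norm)
qed

lemma pdu_gauss_map_torus:
  "pdu (gauss_map torus) = (\<lambda>(u, \<phi>). frame3 e1 e2 (- \<kappa> * cos \<phi> * sin (\<kappa> * u))
                                                (\<kappa> * cos \<phi> * cos (\<kappa> * u)) 0)"
  unfolding gauss_map_torus by (auto simp: fun_eq_iff intro!: pdu_frame3 derivative_eq_intros)

lemma pdv_gauss_map_torus:
  "pdv (gauss_map torus) = (\<lambda>(u, \<phi>). frame3 e1 e2 (- sin \<phi> * cos (\<kappa> * u))
                                                (- sin \<phi> * sin (\<kappa> * u)) (- cos \<phi>))"
  unfolding gauss_map_torus by (auto simp: fun_eq_iff intro!: pdv_frame3 derivative_eq_intros)

lemma II11_torus: "II11 torus (u, \<phi>) = - \<kappa> * (1 - r * \<kappa> * cos \<phi>) * cos \<phi>"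
proof -
  have "- (x * a * (y * a)) - x * b * (y * b) = - (x * y)" if "a\<^sup>2 + b\<^sup>2 = 1" for x y a b :: real
    using that by algebra
  then show ?thesis
    by (simp add: II11_def pdu_pdu_torus gauss_map_torus inner_frame3)
qed

lemma II12_torus: "II12 torus q = 0"
  by (cases q) (simp add: II12_def pdu_pdv_torus gauss_map_torus inner_frame3 algebra_simps)

lemma II22_torus: "II22 torus (u, \<phi>) = r"
proof -
  have "r * cos \<phi> * a * (cos \<phi> * a) + r * cos \<phi> * b * (cos \<phi> * b) + - r * sin \<phi> * - sin \<phi> = r"
    if "a\<^sup>2 + b\<^sup>2 = 1" for a b
    using that sin_cos_squared_add[of \<phi>] by algebra
  then show ?thesis
    by (simp add: II22_def pdv_pdv_torus gauss_map_torus inner_frame3)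
qed

definition det_II :: "real \<Rightarrow> real" where
  "det_II \<phi> = - \<kappa> * r * (1 - r * \<kappa> * cos \<phi>) * cos \<phi>"

definition det_II' :: "real \<Rightarrow> real" where
  "det_II' \<phi> = \<kappa> * r * sin \<phi> * (1 - 2 * r * \<kappa> * cos \<phi>)"

lemma IIdet_torus: "IIdet torus q = det_II (snd q)"
  by (cases q) (simp add: IIdet_def II11_torus II12_torus II22_torus det_II_def)

lemma det_II_has_derivative: "(det_II has_real_derivative det_II' \<phi>) (at \<phi>)"
  unfolding det_II_def[abs_def] det_II'_def by (auto intro!: derivative_eq_intros simp: algebra_simps)

lemma det_II_ne_0: "cos \<phi> \<noteq> 0 \<Longrightarrow> det_II \<phi> \<noteq> 0"
  using one_minus_r_kappa_cos_pos[of \<phi>] curvature_pos radius_pos by (simp add: det_II_def)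

lemma pdu_weighted_pdu_gauss_map_torus:
  "pdu (\<lambda>q. (sqrt \<bar>IIdet torus q\<bar> / II11 torus q) *\<^sub>R pdu (gauss_map torus) q) (u, \<phi>)
     = sqrt \<bar>det_II \<phi>\<bar> *\<^sub>R frame3 e1 e2 (\<kappa> / (1 - r * \<kappa> * cos \<phi>) * cos (\<kappa> * u))
                                        (\<kappa> / (1 - r * \<kappa> * cos \<phi>) * sin (\<kappa> * u)) 0"
proof -
  have "(\<lambda>q. (sqrt \<bar>IIdet torus q\<bar> / II11 torus q) *\<^sub>R pdu (gauss_map torus) q)
      = (\<lambda>(u, \<phi>). frame3 e1 e2 (sqrt \<bar>det_II \<phi>\<bar> / (1 - r * \<kappa> * cos \<phi>) * sin (\<kappa> * u))
                                (- sqrt \<bar>det_II \<phi>\<bar> / (1 - r * \<kappa> * cos \<phi>) * cos (\<kappa> * u)) 0)"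
    using one_minus_r_kappa_cos_pos
    by (auto simp: fun_eq_iff IIdet_torus II11_torus pdu_gauss_map_torus scaleR_frame3 det_II_def)
  then show ?thesis
    unfolding scaleR_frame3 using one_minus_r_kappa_cos_pos[of \<phi>]
    by (simp only:) (rule pdu_frame3; auto intro!: derivative_eq_intros)
qed

lemma pdv_weighted_pdv_gauss_map_torus:
  assumes "det_II \<phi> \<noteq> 0"
  defines "\<eta> \<equiv> det_II' \<phi> / (2 * r * det_II \<phi>)"
  shows "pdv (\<lambda>q. (sqrt \<bar>IIdet torus q\<bar> / II22 torus q) *\<^sub>R pdv (gauss_map torus) q) (u, \<phi>)
     = sqrt \<bar>det_II \<phi>\<bar> *\<^sub>R frame3 e1 e2 ((- \<eta> * sin \<phi> - cos \<phi> / r) * cos (\<kappa> * u))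
                                        ((- \<eta> * sin \<phi> - cos \<phi> / r) * sin (\<kappa> * u))
                                        (- \<eta> * cos \<phi> + sin \<phi> / r)"
proof -
  define g where "g \<phi> = sqrt \<bar>det_II \<phi>\<bar> / r" for \<phi>
  have g_deriv: "(g has_real_derivative det_II' \<phi> * sqrt \<bar>det_II \<phi>\<bar> / (2 * det_II \<phi>) / r) (at \<phi>)"
    unfolding g_def[abs_def]
    by (intro DERIV_cdivide has_real_derivative_sqrt_abs det_II_has_derivative assms(1))
  have "(\<lambda>q. (sqrt \<bar>IIdet torus q\<bar> / II22 torus q) *\<^sub>R pdv (gauss_map torus) q)
      = (\<lambda>(u, \<phi>). frame3 e1 e2 (g \<phi> * (- sin \<phi> * cos (\<kappa> * u)))
                                (g \<phi> * (- sin \<phi> * sin (\<kappa> * u))) (g \<phi> * - cos \<phi>))"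
    by (auto simp: fun_eq_iff IIdet_torus II22_torus pdv_gauss_map_torus scaleR_frame3 g_def)
  then show ?thesis
    unfolding scaleR_frame3 \<eta>_def using assms(1) radius_pos g_def[of \<phi>]
    by (simp only:) (rule pdv_frame3; auto intro!: derivative_eq_intros g_deriv simp: field_simps)
qed

definition lap_radial :: "real \<Rightarrow> real" where
  "lap_radial \<phi> = (3 * (cos \<phi>)\<^sup>2 - 4 * r * \<kappa> * (cos \<phi>)^3 - 1) / (2 * r * (1 - r * \<kappa> * cos \<phi>) * cos \<phi>)"

definition lap_axial :: "real \<Rightarrow> real" where
  "lap_axial \<phi> = sin \<phi> * (\<kappa> * cos \<phi> / (2 * (1 - r * \<kappa> * cos \<phi>)) - 3 / (2 * r))"

lemma lap_radial_eq:
  assumes "cos \<phi> \<noteq> 0"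
  shows "- \<kappa> / (1 - r * \<kappa> * cos \<phi>) + det_II' \<phi> / (2 * r * det_II \<phi>) * sin \<phi> + cos \<phi> / r
           = lap_radial \<phi>"
proof -
  define P where "P = 1 - r * \<kappa> * cos \<phi>"
  have "P \<noteq> 0"
    using one_minus_r_kappa_cos_pos[of \<phi>] by (simp add: P_def)
  then have "- \<kappa> / P + det_II' \<phi> / (2 * r * det_II \<phi>) * sin \<phi> + cos \<phi> / r
      = (- 2 * \<kappa> * r * cos \<phi> - (1 - 2 * r * \<kappa> * cos \<phi>) * (sin \<phi>)\<^sup>2 + 2 * P * (cos \<phi>)\<^sup>2)
        / (2 * r * P * cos \<phi>)"
    using assms radius_pos curvature_pos unfolding det_II_def det_II'_def P_def[symmetric]
    by (simp add: field_simps power2_eq_square)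
  also have "\<dots> = lap_radial \<phi>"
  proof -
    have "- 2 * \<kappa> * r * cos \<phi> - (1 - 2 * r * \<kappa> * cos \<phi>) * (sin \<phi>)\<^sup>2 + 2 * P * (cos \<phi>)\<^sup>2
        = 3 * (cos \<phi>)\<^sup>2 - 4 * r * \<kappa> * (cos \<phi>)^3 - 1"
      unfolding P_def using sin_squared_eq[of \<phi>] by algebra
    then show ?thesis
      unfolding lap_radial_def P_def by simp
  qed
  finally show ?thesis
    unfolding P_def .
qed

lemma lap_axial_eq:
  assumes "cos \<phi> \<noteq> 0"
  shows "det_II' \<phi> / (2 * r * det_II \<phi>) * cos \<phi> - sin \<phi> / r = lap_axial \<phi>"
  using assms one_minus_r_kappa_cos_pos[of \<phi>] radius_pos curvature_pos
  unfolding lap_axial_def det_II_def det_II'_def by (simp add: field_simps)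

lemma lapII_gauss_map_torus:
  assumes "cos \<phi> \<noteq> 0"
  shows "lapII torus (gauss_map torus) (u, \<phi>)
           = frame3 e1 e2 (lap_radial \<phi> * cos (\<kappa> * u)) (lap_radial \<phi> * sin (\<kappa> * u)) (lap_axial \<phi>)"
  unfolding lapII_diagonal[OF II12_torus] pdu_weighted_pdu_gauss_map_torus
    pdv_weighted_pdv_gauss_map_torus[OF det_II_ne_0[OF assms]]
  unfolding IIdet_torus snd_conv lap_radial_eq[OF assms, symmetric] lap_axial_eq[OF assms, symmetric]
  using det_II_ne_0[OF assms]
  by (simp add: frame3_add scaleR_frame3 frame3_eq_iff algebra_simps flip: scaleR_add_right)

lemma lap_radial_not_proportional_to_cos:
  assumes "a < b" and "\<And>\<phi>. \<phi> \<in> {a<..<b} \<Longrightarrow> cos \<phi> \<noteq> 0 \<and> lap_radial \<phi> = K * cos \<phi>"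
  shows False
proof -
  define p where "p = [:-1, 0, 3 - 2 * K * r, 2 * K * r * r * \<kappa> - 4 * r * \<kappa>:]"
  have "poly p (cos \<phi>) = 0" if "\<phi> \<in> {a<..<b}" for \<phi>
  proof -
    have "cos \<phi> \<noteq> 0" and "lap_radial \<phi> = K * cos \<phi>"
      using assms(2)[OF that] by auto
    moreover have "1 - r * \<kappa> * cos \<phi> \<noteq> 0"
      using one_minus_r_kappa_cos_pos[of \<phi>] by simp
    ultimately have "3 * (cos \<phi>)\<^sup>2 - 4 * r * \<kappa> * (cos \<phi>)^3 - 1
        = 2 * K * r * (1 - r * \<kappa> * cos \<phi>) * (cos \<phi>)\<^sup>2"
      using radius_pos by (simp add: lap_radial_def field_simps power2_eq_square)
    then show ?thesis
      by (simp add: p_def algebra_simps power2_eq_square power3_eq_cube)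
  qed
  moreover have "p \<noteq> 0"
    by (simp add: p_def)
  ultimately show False
    using poly_cos_nonzero_on_interval[OF _ assms(1)] by blast
qed

lemma chord_ne_0:
  assumes "0 < \<kappa> * h" and "\<kappa> * h \<le> pi"
  shows "frame3 e1 e2 (cos (\<kappa> * u) - cos (\<kappa> * (u + h))) (sin (\<kappa> * u) - sin (\<kappa> * (u + h))) 0 \<noteq> 0"
proof
  assume "frame3 e1 e2 (cos (\<kappa> * u) - cos (\<kappa> * (u + h))) (sin (\<kappa> * u) - sin (\<kappa> * (u + h))) 0 = 0"
  then have "cos (\<kappa> * (u + h) - \<kappa> * u) = 1"
    unfolding frame3_eq_0_iff cos_diff by (simp flip: power2_eq_square)
  moreover have "cos (\<kappa> * h) < cos 0"
    using assms by (intro cos_monotone_0_pi) auto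
  ultimately show False
    by (simp add: algebra_simps)
qed

lemma lap_radial_chord:
  assumes "cos \<phi> \<noteq> 0"
    and "lapII torus (gauss_map torus) (u, \<phi>) = A *v gauss_map torus (u, \<phi>)"
    and "lapII torus (gauss_map torus) (u', \<phi>) = A *v gauss_map torus (u', \<phi>)"
  defines "d \<equiv> frame3 e1 e2 (cos (\<kappa> * u) - cos (\<kappa> * u')) (sin (\<kappa> * u) - sin (\<kappa> * u')) 0"
  shows "lap_radial \<phi> *\<^sub>R d = cos \<phi> *\<^sub>R (A *v d)"
proof -
  have "lap_radial \<phi> *\<^sub>R d = lapII torus (gauss_map torus) (u, \<phi>) - lapII torus (gauss_map torus) (u', \<phi>)"
    unfolding lapII_gauss_map_torus[OF assms(1)] d_def by (simp add: frame3_diff scaleR_frame3 algebra_simps)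
  also have "\<dots> = A *v (gauss_map torus (u, \<phi>) - gauss_map torus (u', \<phi>))"
    unfolding assms(2,3) by (simp add: matrix_vector_mult_diff_distrib)
  also have "\<dots> = cos \<phi> *\<^sub>R (A *v d)"
    unfolding gauss_map_torus d_def by (simp add: frame3_diff scaleR_frame3 algebra_simps flip: matrix_vector_mult_scaleR)
  finally show ?thesis .
qed

lemma gauss_map_not_lapII_eigen:
  assumes "open W" and "W \<noteq> {}" and "\<forall>p\<in>W. cos (snd p) \<noteq> 0"
    and eigen: "\<forall>p\<in>W. lapII torus (gauss_map torus) p = A *v gauss_map torus p"
  shows False
proof -
  obtain u0 \<phi>0 where "(u0, \<phi>0) \<in> W"
    using assms(2) by auto
  then obtain \<epsilon> where "\<epsilon> > 0"
    and square: "\<And>u \<phi>. \<bar>u - u0\<bar> < \<epsilon> \<Longrightarrow> \<bar>\<phi> - \<phi>0\<bar> < \<epsilon> \<Longrightarrow> (u, \<phi>) \<in> W"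
    using open_contains_square[OF assms(1)] by metis
  define h where "h = min (\<epsilon> / 2) (pi / \<kappa>)"
  define d where "d = frame3 e1 e2 (cos (\<kappa> * u0) - cos (\<kappa> * (u0 + h))) (sin (\<kappa> * u0) - sin (\<kappa> * (u0 + h))) 0"
  have "0 < h" and "h < \<epsilon>" and "h \<le> pi / \<kappa>"
    using \<open>\<epsilon> > 0\<close> curvature_pos by (auto simp: h_def)
  then have "0 < \<kappa> * h" and "\<kappa> * h \<le> pi"
    using curvature_pos by (simp_all add: field_simps)
  then have "d \<noteq> 0"
    unfolding d_def by (rule chord_ne_0)
  have in_W: "(u0, \<phi>) \<in> W" "(u0 + h, \<phi>) \<in> W" if "\<phi> \<in> {\<phi>0 - \<epsilon><..<\<phi>0 + \<epsilon>}" for \<phi>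
    using square that \<open>\<epsilon> > 0\<close> \<open>0 < h\<close> \<open>h < \<epsilon>\<close> by (auto simp: abs_less_iff)
  have cos_ne: "cos \<phi> \<noteq> 0" if "\<phi> \<in> {\<phi>0 - \<epsilon><..<\<phi>0 + \<epsilon>}" for \<phi>
    using in_W(1)[OF that] assms(3) by fastforce
  have chord_eq: "\<forall>\<phi>\<in>{\<phi>0 - \<epsilon><..<\<phi>0 + \<epsilon>}. lap_radial \<phi> *\<^sub>R d = cos \<phi> *\<^sub>R (A *v d)"
    unfolding d_def using in_W cos_ne eigen by (auto intro!: lap_radial_chord)
  obtain K where K: "\<forall>\<phi>\<in>{\<phi>0 - \<epsilon><..<\<phi>0 + \<epsilon>}. lap_radial \<phi> = K * cos \<phi>"
    using scaleR_proportional[OF chord_eq \<open>d \<noteq> 0\<close>, where s = \<phi>0] cos_ne \<open>\<epsilon> > 0\<close> by auto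
  show False
    by (rule lap_radial_not_proportional_to_cos[of "\<phi>0 - \<epsilon>" "\<phi>0 + \<epsilon>" K])
       (use K cos_ne \<open>\<epsilon> > 0\<close> in auto)
qed

end

theorem corollary1:
  fixes c e1 e2 :: "real^3" and \<kappa> r :: real and W :: "(real \<times> real) set"
  assumes "norm e1 = 1" and "norm e2 = 1" and "inner e1 e2 = 0"
    and "\<kappa> > 0" and "0 < r" and "r < 1 / \<kappa>"
    and "open W" and "W \<noteq> {}" and "\<forall>p\<in>W. cos (snd p) \<noteq> 0"
  shows "\<not> (\<exists>A :: real^3^3. \<forall>p\<in>W.
            lapII (tube (circle c e1 e2 \<kappa>) r) (gauss_map (tube (circle c e1 e2 \<kappa>) r)) p
              = A *v gauss_map (tube (circle c e1 e2 \<kappa>) r) p)"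
proof -
  interpret anchor_ring e1 e2 c \<kappa> r
    using assms by unfold_locales auto
  show ?thesis
    using gauss_map_not_lapII_eigen[OF assms(7-9)] by blast
qed

end
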